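(* Let $G$ be a simple stochastic game, let $A$ be a subset of the arcs of $G$, and let $\sigma$ be a positional $\text{MAX}$ strategy. Then $K^{G}_{\sigma} = K^{G[A,\sigma]}_{\sigma}$, i.e. a vertex $x$ of $G$ satisfies $v^G_\sigma(x)=0$ if and only if $v^{G[A,\sigma]}_\sigma(x)=0$.
   Context: A simple stochastic game (SSG) $G$ is a finite directed graph whose vertex set $V$ is partitioned into $V_{\max}$ (MAX vertices), $V_{\min}$ (MIN vertices), $V_R$ (random vertices) and a nonempty set $V_S$ (sinks); every vertex of $V_{\max}\cup V_{\min}\cup V_R$ has at least one outgoing arc, every sink has exactly one outgoing arc, which is a self-loop; each random vertex $x$ carries a probability distribution $p_x$ with rational values on its out-neighbourhood $N^+(x)$, with $p_x(y)>0$ for all $y\in N^+(x)$; each sink $s$ has a rational value $\mathrm{Val}(s)\in[0,1]$. A positional MAX (resp. MIN) strategy is a map $\sigma$ (resp. $\tau$) assigning to each MAX (resp. MIN) vertex one of its out-neighbours. Given $\sigma,\tau$ and a start vertex $x_0$, the random play $X_0=x_0,X_1,\dots$ is defined by $X_{t+1}=\sigma(X_t)$ if $X_t\in V_{\max}$, $X_{t+1}=\tau(X_t)$ if $X_t\in V_{\min}$, $X_{t+1}$ drawn according to $p_{X_t}$ independently of everything else if $X_t\in V_R$, and $X_{t+1}=X_t$ if $X_t\in V_S$. The value of the play is $\mathrm{Val}(s)$ if the play reaches a sink $s$ and $0$ if it never reaches a sink; $v^G_{\sigma,\tau}(x_0)$ is its expectation. A best response to $\sigma$ is a positional MIN strategy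 $\tau$ with $v_{\sigma,\tau}\le v_{\sigma,\tau'}$ pointwise for all MIN strategies $\tau'$; positional best responses exist, and $v^G_\sigma:=v^G_{\sigma,\tau}$ for any best response $\tau$. $K^G_\sigma$ denotes the set of vertices $x$ with $v^G_\sigma(x)=0$. Transformed game: for a set $A$ of arcs of $G$ and $f:A\to\mathbb{Q}$, $G[A,f]$ is the SSG obtained from a copy of $G$ by replacing each arc $e=(x,y)\in A$ by an arc $(x,s_e)$, where $s_e$ is a new sink with value $f(e)$ (if $x$ is random, $p_x(s_e)=p_x(y)$); the vertex $y$ is kept. $G[A,\sigma]$ denotes $G[A,f]$ with $f((x,y))=v^G_\sigma(y)$. Strategies of $G$ and $G[A,\sigma]$ are identified (a MAX vertex $x$ with $\sigma(x)=y$, $(x,y)\in A$, moves to $s_{(x,y)}$ in $G[A,\sigma]$), and value vectors are compared only on the vertices of $G$. *)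

theory Defs
  imports "HOL-Probability.Probability"
begin

text \<open>The distribution of a random vertex x is given
  as a probability mass function rdist x whose support is the out-neighbourhood of x
  (so p_x(y) = pmf (rdist x) y > 0 exactly for y in N+(x)).\<close>

record 'v ssg =
  Vmax :: "'v set"
  Vmin :: "'v set"
  VR   :: "'v set"
  VS   :: "'v set"
  arcs :: "('v \<times> 'v) set"
  rdist :: "'v \<Rightarrow> 'v pmf"
  sval :: "'v \<Rightarrow> real"

definition verts :: "('v, 'b) ssg_scheme \<Rightarrow> 'v set" where
  "verts G = Vmax G \<union> Vmin G \<union> VR G \<union> VS G"

definition outn :: "('v, 'b) ssg_scheme \<Rightarrow> 'v \<Rightarrow> 'v set" where
  "outn G x = {y. (x, y) \<in> arcs G}"

definition is_ssg :: "('v, 'b) ssg_scheme \<Rightarrow> bool" where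
  "is_ssg G \<longleftrightarrow>
     finite (verts G) \<and>
     Vmax G \<inter> Vmin G = {} \<and> Vmax G \<inter> VR G = {} \<and> Vmax G \<inter> VS G = {} \<and>
     Vmin G \<inter> VR G = {} \<and> Vmin G \<inter> VS G = {} \<and> VR G \<inter> VS G = {} \<and>
     VS G \<noteq> {} \<and>
     arcs G \<subseteq> verts G \<times> verts G \<and>
     (\<forall>x \<in> Vmax G \<union> Vmin G \<union> VR G. outn G x \<noteq> {}) \<and>
     (\<forall>s \<in> VS G. outn G s = {s}) \<and>
     (\<forall>x \<in> VR G. set_pmf (rdist G x) = outn G x \<and> (\<forall>y. pmf (rdist G x) y \<in> \<rat>)) \<and>
     (\<forall>s \<in> VS G. sval G s \<in> \<rat> \<and> 0 \<le> sval G s \<and> sval G s \<le> 1)"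

definition max_strategy :: "('v, 'b) ssg_scheme \<Rightarrow> ('v \<Rightarrow> 'v) \<Rightarrow> bool" where
  "max_strategy G \<sigma> \<longleftrightarrow> (\<forall>x \<in> Vmax G. (x, \<sigma> x) \<in> arcs G)"

definition min_strategy :: "('v, 'b) ssg_scheme \<Rightarrow> ('v \<Rightarrow> 'v) \<Rightarrow> bool" where
  "min_strategy G \<tau> \<longleftrightarrow> (\<forall>x \<in> Vmin G. (x, \<tau> x) \<in> arcs G)"

definition step :: "('v, 'b) ssg_scheme \<Rightarrow> ('v \<Rightarrow> 'v) \<Rightarrow> ('v \<Rightarrow> 'v) \<Rightarrow> 'v \<Rightarrow> 'v pmf" where
  "step G \<sigma> \<tau> x =
     (if x \<in> Vmax G then return_pmf (\<sigma> x)
      else if x \<in> Vmin G then return_pmf (\<tau> x)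
      else if x \<in> VR G then rdist G x
      else return_pmf x)"

fun play_dist :: "('v, 'b) ssg_scheme \<Rightarrow> ('v \<Rightarrow> 'v) \<Rightarrow> ('v \<Rightarrow> 'v) \<Rightarrow> 'v \<Rightarrow> nat \<Rightarrow> 'v pmf" where
  "play_dist G \<sigma> \<tau> x0 0 = return_pmf x0"
| "play_dist G \<sigma> \<tau> x0 (Suc t) = bind_pmf (play_dist G \<sigma> \<tau> x0 t) (step G \<sigma> \<tau>)"

definition sink_payoff :: "('v, 'b) ssg_scheme \<Rightarrow> 'v \<Rightarrow> real" where
  "sink_payoff G y = (if y \<in> VS G then sval G y else 0)"

text \<open>Since sinks are absorbing, the value of the play (Val(s) if sink s is reached,
  0 otherwise) is the limit of sink_payoff(X_t); its expectation is the limit of the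
  expectations E[sink_payoff(X_t)] (monotone/dominated convergence).\<close>

definition play_value :: "('v, 'b) ssg_scheme \<Rightarrow> ('v \<Rightarrow> 'v) \<Rightarrow> ('v \<Rightarrow> 'v) \<Rightarrow> 'v \<Rightarrow> real" where
  "play_value G \<sigma> \<tau> x0 =
     lim (\<lambda>t. measure_pmf.expectation (play_dist G \<sigma> \<tau> x0 t) (sink_payoff G))"

definition best_response :: "('v, 'b) ssg_scheme \<Rightarrow> ('v \<Rightarrow> 'v) \<Rightarrow> ('v \<Rightarrow> 'v) \<Rightarrow> bool" where
  "best_response G \<sigma> \<tau> \<longleftrightarrow> min_strategy G \<tau> \<and>
     (\<forall>\<tau>'. min_strategy G \<tau>' \<longrightarrow> (\<forall>x \<in> verts G. play_value G \<sigma> \<tau> x \<le> play_value G \<sigma> \<tau>' x))"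

definition value_sigma :: "('v, 'b) ssg_scheme \<Rightarrow> ('v \<Rightarrow> 'v) \<Rightarrow> 'v \<Rightarrow> real" where
  "value_sigma G \<sigma> = play_value G \<sigma> (SOME \<tau>. best_response G \<sigma> \<tau>)"

definition Kset :: "('v, 'b) ssg_scheme \<Rightarrow> ('v \<Rightarrow> 'v) \<Rightarrow> 'v set" where
  "Kset G \<sigma> = {x \<in> verts G. value_sigma G \<sigma> x = 0}"

text \<open>Vertices of G[A,f]: Inl x for the copy of vertex x of G, Inr e for the new sink s_e.\<close>

definition redirect :: "('v \<times> 'v) set \<Rightarrow> 'v \<Rightarrow> 'v \<Rightarrow> 'v + ('v \<times> 'v)" where
  "redirect A x y = (if (x, y) \<in> A then Inr (x, y) else Inl y)"

definition transform :: "('v, 'b) ssg_scheme \<Rightarrow> ('v \<times> 'v) set \<Rightarrow> ('v \<times> 'v \<Rightarrow> real)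
                          \<Rightarrow> ('v + ('v \<times> 'v)) ssg" where
  "transform G A f =
     \<lparr> Vmax = Inl ` Vmax G, Vmin = Inl ` Vmin G, VR = Inl ` VR G,
       VS = Inl ` VS G \<union> Inr ` A,
       arcs = {(Inl x, redirect A x y) | x y. (x, y) \<in> arcs G} \<union> {(Inr e, Inr e) | e. e \<in> A},
       rdist = (\<lambda>u. case u of Inl x \<Rightarrow> map_pmf (redirect A x) (rdist G x)
                             | Inr e \<Rightarrow> return_pmf (Inr e)),
       sval = (\<lambda>u. case u of Inl x \<Rightarrow> sval G x | Inr e \<Rightarrow> f e) \<rparr>"

definition transform_sigma :: "('v, 'b) ssg_scheme \<Rightarrow> ('v \<times> 'v) set \<Rightarrow> ('v \<Rightarrow> 'v)
                                \<Rightarrow> ('v + ('v \<times> 'v)) ssg" where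
  "transform_sigma G A \<sigma> = transform G A (\<lambda>(x, y). value_sigma G \<sigma> y)"

definition lift_strategy :: "('v \<times> 'v) set \<Rightarrow> ('v \<Rightarrow> 'v) \<Rightarrow> 'v + ('v \<times> 'v) \<Rightarrow> 'v + ('v \<times> 'v)" where
  "lift_strategy A \<sigma> u = (case u of Inl x \<Rightarrow> redirect A x (\<sigma> x) | Inr e \<Rightarrow> Inr e)"

end

theory Submission
  imports Defs
begin

(* In fact v^G_sigma(x) = v^(G[A,sigma])_sigma(x) for every vertex x of G.
   A play value v_(sigma,tau) is the limit of the increasing expected payoffs after t steps;
   hence it is a fixed point of the one-step expectation and lies below every excessive
   majorant of the sink payoffs.
   Upper bound: for a best response tau of G, the function equal to v^G_sigma on the copy of G
   and to v^G_sigma(y) on the new sink s_(x,y) is such a majorant for the lifted strategies.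
   Lower bound: project a best response of G[A,sigma] to a MIN strategy tau' of G and switch,
   vertex by vertex, between tau and tau' according to whether v^G_sigma or the value of the
   lifted tau' in G[A,sigma] is smaller. The minimum of these two values is excessive for the
   switched strategy, so its value lies below this minimum, while it is at least v^G_sigma
   because tau is a best response. *)

lemma expectation_bind_pmf_bounded:
  fixes f :: "'b \<Rightarrow> real"
  assumes "\<And>y. \<bar>f y\<bar> \<le> B"
  shows "measure_pmf.expectation (bind_pmf M N) f =
         measure_pmf.expectation M (\<lambda>x. measure_pmf.expectation (N x) f)"
  unfolding measure_pmf_bind
  by (rule integral_bind[where K = "count_space UNIV" and B = B and B' = 1])
     (auto simp: assms measure_pmf.emeasure_space_1 measure_pmf_in_subprob_space
           intro: measure_pmf.finite_measure)

lemma expectation_mono_finite_pmf: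
  fixes f g :: "'a \<Rightarrow> real"
  assumes "finite (set_pmf M)" and "\<And>y. y \<in> set_pmf M \<Longrightarrow> f y \<le> g y"
  shows "measure_pmf.expectation M f \<le> measure_pmf.expectation M g"
  using assms
  by (intro integral_mono_AE integrable_measure_pmf_finite) (auto simp: AE_measure_pmf_iff)

lemma play_dist_Suc_first:
  "play_dist H \<sigma> \<tau> x (Suc t) = bind_pmf (step H \<sigma> \<tau> x) (\<lambda>y. play_dist H \<sigma> \<tau> y t)"
proof (induction t arbitrary: x)
  case 0
  show ?case by (simp add: bind_return_pmf bind_return_pmf')
next
  case (Suc t)
  have "play_dist H \<sigma> \<tau> x (Suc (Suc t)) = bind_pmf (play_dist H \<sigma> \<tau> x (Suc t)) (step H \<sigma> \<tau>)"
    by simp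
  also have "\<dots> = bind_pmf (step H \<sigma> \<tau> x) (\<lambda>y. play_dist H \<sigma> \<tau> y (Suc t))"
    by (subst Suc.IH) (simp add: bind_assoc_pmf)
  finally show ?case .
qed

lemma step_cong: "\<tau>1 x = \<tau>2 x \<Longrightarrow> step H \<sigma> \<tau>1 x = step H \<sigma> \<tau>2 x"
  by (simp add: step_def)

lemma play_value_cong:
  assumes "\<And>y. y \<in> Vmin H \<Longrightarrow> \<tau>1 y = \<tau>2 y"
  shows "play_value H \<sigma> \<tau>1 = play_value H \<sigma> \<tau>2"
proof -
  have "step H \<sigma> \<tau>1 = step H \<sigma> \<tau>2"
    using assms by (auto simp: step_def fun_eq_iff)
  then have "play_dist H \<sigma> \<tau>1 x t = play_dist H \<sigma> \<tau>2 x t" for x t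
    by (induction t) simp_all
  then show ?thesis
    unfolding play_value_def by simp
qed

(* The part of is_ssg the value theory needs; unlike is_ssg it is inherited by G[A,f],
   whose new sink values need not be rational. *)
definition wf_game :: "('v, 'b) ssg_scheme \<Rightarrow> bool" where
  "wf_game H \<longleftrightarrow>
     VS H \<inter> (Vmax H \<union> Vmin H \<union> VR H) = {} \<and>
     (\<forall>s \<in> VS H. 0 \<le> sval H s \<and> sval H s \<le> 1) \<and>
     (\<forall>x \<in> VR H. finite (set_pmf (rdist H x)))"

abbreviation payoff_at ::
  "('v, 'b) ssg_scheme \<Rightarrow> ('v \<Rightarrow> 'v) \<Rightarrow> ('v \<Rightarrow> 'v) \<Rightarrow> 'v \<Rightarrow> nat \<Rightarrow> real" where
  "payoff_at H \<sigma> \<tau> x t \<equiv> measure_pmf.expectation (play_dist H \<sigma> \<tau> x t) (sink_payoff H)"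

context
  fixes H :: "('v, 'b) ssg_scheme"
  assumes wf: "wf_game H"
begin

lemma sink_payoff_nonneg: "0 \<le> sink_payoff H y"
  using wf by (auto simp: wf_game_def sink_payoff_def)

lemma sink_payoff_le_1: "sink_payoff H y \<le> 1"
  using wf by (auto simp: wf_game_def sink_payoff_def)

lemma finite_set_pmf_step: "finite (set_pmf (step H \<sigma> \<tau> x))"
  using wf by (auto simp: wf_game_def step_def)

lemma expectation_step_mono:
  fixes f g :: "'v \<Rightarrow> real"
  assumes "\<And>y. f y \<le> g y"
  shows "measure_pmf.expectation (step H \<sigma> \<tau> x) f \<le> measure_pmf.expectation (step H \<sigma> \<tau> x) g"
  using finite_set_pmf_step assms by (rule expectation_mono_finite_pmf)

lemma payoff_at_Suc:
  "payoff_at H \<sigma> \<tau> x (Suc t) = measure_pmf.expectation (step H \<sigma> \<tau> x) (\<lambda>y. payoff_at H \<sigma> \<tau> y t)"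
  unfolding play_dist_Suc_first
  using sink_payoff_nonneg sink_payoff_le_1
  by (intro expectation_bind_pmf_bounded[where B = 1]) (simp add: abs_le_iff)

lemma payoff_at_bounds: "0 \<le> payoff_at H \<sigma> \<tau> x t \<and> payoff_at H \<sigma> \<tau> x t \<le> 1"
proof (induction t arbitrary: x)
  case 0
  show ?case using sink_payoff_nonneg sink_payoff_le_1 by simp
next
  case (Suc t)
  have "measure_pmf.expectation (step H \<sigma> \<tau> x) (\<lambda>_. 0) \<le>
        measure_pmf.expectation (step H \<sigma> \<tau> x) (\<lambda>y. payoff_at H \<sigma> \<tau> y t)"
   and "measure_pmf.expectation (step H \<sigma> \<tau> x) (\<lambda>y. payoff_at H \<sigma> \<tau> y t) \<le>
        measure_pmf.expectation (step H \<sigma> \<tau> x) (\<lambda>_. 1)"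
    by (rule expectation_step_mono, use Suc.IH in blast)+
  then show ?case
    unfolding payoff_at_Suc by simp
qed

lemma incseq_payoff_at: "incseq (\<lambda>t. payoff_at H \<sigma> \<tau> x t)"
proof -
  have "payoff_at H \<sigma> \<tau> x t \<le> payoff_at H \<sigma> \<tau> x (Suc t)" for t
  proof (induction t arbitrary: x)
    case 0
    show ?case
    proof (cases "x \<in> VS H")
      case True
      then have "step H \<sigma> \<tau> x = return_pmf x"
        using wf by (auto simp: wf_game_def step_def)
      then show ?thesis
        unfolding payoff_at_Suc by simp
    next
      case False
      then have "payoff_at H \<sigma> \<tau> x 0 = 0"
        by (simp add: sink_payoff_def)
      then show ?thesis
        using payoff_at_bounds[of \<sigma> \<tau> x 1] by simp
    qed
  next
    case (Suc t)
    show ?case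
      unfolding payoff_at_Suc[of _ _ x] by (rule expectation_step_mono) (rule Suc.IH)
  qed
  then show ?thesis by (rule incseq_SucI)
qed

lemma payoff_at_tendsto_play_value: "(\<lambda>t. payoff_at H \<sigma> \<tau> x t) \<longlonglongrightarrow> play_value H \<sigma> \<tau> x"
proof -
  have "bdd_above (range (\<lambda>t. payoff_at H \<sigma> \<tau> x t))"
    using payoff_at_bounds by (intro bdd_aboveI[where M = 1]) auto
  then have "convergent (\<lambda>t. payoff_at H \<sigma> \<tau> x t)"
    using incseq_payoff_at LIMSEQ_incseq_SUP convergentI by blast
  then show ?thesis
    unfolding play_value_def by (rule convergent_LIMSEQ_iff[THEN iffD1])
qed

lemma play_value_nonneg: "0 \<le> play_value H \<sigma> \<tau> x"
  by (rule LIMSEQ_le_const[OF payoff_at_tendsto_play_value]) (use payoff_at_bounds in blast)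

lemma play_value_le_1: "play_value H \<sigma> \<tau> x \<le> 1"
  by (rule LIMSEQ_le_const2[OF payoff_at_tendsto_play_value]) (use payoff_at_bounds in blast)

lemma sink_payoff_le_play_value: "sink_payoff H x \<le> play_value H \<sigma> \<tau> x"
proof -
  have "payoff_at H \<sigma> \<tau> x 0 \<le> play_value H \<sigma> \<tau> x"
    by (rule incseq_le[OF incseq_payoff_at payoff_at_tendsto_play_value])
  then show ?thesis by simp
qed

lemma play_value_step:
  "play_value H \<sigma> \<tau> x = measure_pmf.expectation (step H \<sigma> \<tau> x) (play_value H \<sigma> \<tau>)"
proof -
  let ?M = "step H \<sigma> \<tau> x"
  have expectation_sum: "measure_pmf.expectation ?M f = (\<Sum>a\<in>set_pmf ?M. pmf ?M a *\<^sub>R f a)"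
    for f :: "'v \<Rightarrow> real"
    using finite_set_pmf_step by (rule integral_measure_pmf) auto
  have "(\<lambda>t. payoff_at H \<sigma> \<tau> x (Suc t)) \<longlonglongrightarrow> measure_pmf.expectation ?M (play_value H \<sigma> \<tau>)"
    unfolding payoff_at_Suc expectation_sum
    by (intro tendsto_intros payoff_at_tendsto_play_value)
  moreover have "(\<lambda>t. payoff_at H \<sigma> \<tau> x (Suc t)) \<longlonglongrightarrow> play_value H \<sigma> \<tau> x"
    using payoff_at_tendsto_play_value by (rule LIMSEQ_Suc)
  ultimately show ?thesis
    using LIMSEQ_unique by blast
qed

lemma play_value_le_excessive:
  assumes excessive: "\<And>y. measure_pmf.expectation (step H \<sigma> \<tau> y) u \<le> u y"
    and payoff: "\<And>y. sink_payoff H y \<le> u y"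
  shows "play_value H \<sigma> \<tau> x \<le> u x"
proof -
  have "payoff_at H \<sigma> \<tau> x t \<le> u x" for t
  proof (induction t arbitrary: x)
    case 0
    show ?case using payoff by simp
  next
    case (Suc t)
    have "payoff_at H \<sigma> \<tau> x (Suc t) \<le> measure_pmf.expectation (step H \<sigma> \<tau> x) u"
      unfolding payoff_at_Suc by (rule expectation_step_mono) (rule Suc.IH)
    then show ?case
      using excessive[of x] by linarith
  qed
  then show ?thesis
    by (intro LIMSEQ_le_const2[OF payoff_at_tendsto_play_value]) auto
qed

lemma play_value_switch_le:
  fixes \<sigma> \<tau> \<tau>' :: "'v \<Rightarrow> 'v" and b :: "'v \<Rightarrow> real"
  defines "u \<equiv> \<lambda>z. min (play_value H \<sigma> \<tau> z) (b z)"
  assumes payoff: "\<And>y. sink_payoff H y \<le> b y"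
    and step_le: "\<And>y. measure_pmf.expectation (step H \<sigma> \<tau>' y) u \<le> b y"
  shows "play_value H \<sigma> (\<lambda>y. if b y < play_value H \<sigma> \<tau> y then \<tau>' y else \<tau> y) x \<le> u x"
proof (rule play_value_le_excessive)
  let ?\<tau>2 = "\<lambda>y. if b y < play_value H \<sigma> \<tau> y then \<tau>' y else \<tau> y"
  fix y
  show "sink_payoff H y \<le> u y"
    using sink_payoff_le_play_value payoff by (simp add: u_def)
  have "measure_pmf.expectation (step H \<sigma> \<tau> y) u \<le>
        measure_pmf.expectation (step H \<sigma> \<tau> y) (play_value H \<sigma> \<tau>)"
    by (rule expectation_step_mono) (simp add: u_def)
  also have "\<dots> = play_value H \<sigma> \<tau> y"
    by (rule play_value_step[symmetric])
  finally show "measure_pmf.expectation (step H \<sigma> ?\<tau>2 y) u \<le> u y"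
    using step_le[of y] step_cong[of ?\<tau>2 y \<tau>' H \<sigma>] step_cong[of ?\<tau>2 y \<tau> H \<sigma>]
    by (cases "b y < play_value H \<sigma> \<tau> y") (simp_all add: u_def)
qed

lemma play_value_switch_le_min:
  "play_value H \<sigma> (\<lambda>y. if play_value H \<sigma> \<tau>' y < play_value H \<sigma> \<tau> y then \<tau>' y else \<tau> y) x \<le>
   min (play_value H \<sigma> \<tau> x) (play_value H \<sigma> \<tau>' x)"
proof (rule play_value_switch_le)
  fix y
  show "sink_payoff H y \<le> play_value H \<sigma> \<tau>' y"
    by (rule sink_payoff_le_play_value)
  have "measure_pmf.expectation (step H \<sigma> \<tau>' y)
          (\<lambda>z. min (play_value H \<sigma> \<tau> z) (play_value H \<sigma> \<tau>' z)) \<le>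
        measure_pmf.expectation (step H \<sigma> \<tau>' y) (play_value H \<sigma> \<tau>')"
    by (rule expectation_step_mono) simp
  then show "measure_pmf.expectation (step H \<sigma> \<tau>' y)
          (\<lambda>z. min (play_value H \<sigma> \<tau> z) (play_value H \<sigma> \<tau>' z)) \<le> play_value H \<sigma> \<tau>' y"
    using play_value_step by simp
qed

end

lemma finite_min_strategies_fixing_others:
  assumes "finite (verts H)" and "arcs H \<subseteq> verts H \<times> verts H"
  shows "finite {\<tau>. min_strategy H \<tau> \<and> (\<forall>x. x \<notin> Vmin H \<longrightarrow> \<tau> x = x)}"
    (is "finite ?S")
proof -
  have "inj_on (\<lambda>\<tau>. restrict \<tau> (Vmin H)) ?S"
  proof (rule inj_onI)
    fix \<tau>1 \<tau>2
    assume "\<tau>1 \<in> ?S" "\<tau>2 \<in> ?S" and eq: "restrict \<tau>1 (Vmin H) = restrict \<tau>2 (Vmin H)"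
    show "\<tau>1 = \<tau>2"
    proof
      fix x
      show "\<tau>1 x = \<tau>2 x"
        using \<open>\<tau>1 \<in> ?S\<close> \<open>\<tau>2 \<in> ?S\<close> fun_cong[OF eq, of x] by (cases "x \<in> Vmin H") auto
    qed
  qed
  have "(\<lambda>\<tau>. restrict \<tau> (Vmin H)) ` ?S \<subseteq> Vmin H \<rightarrow>\<^sub>E verts H"
    using assms(2) unfolding min_strategy_def by auto
  moreover have "finite (Vmin H \<rightarrow>\<^sub>E verts H)"
    using assms(1) by (intro finite_PiE) (auto simp: verts_def)
  ultimately have "finite ((\<lambda>\<tau>. restrict \<tau> (Vmin H)) ` ?S)"
    by (rule finite_subset)
  with \<open>inj_on (\<lambda>\<tau>. restrict \<tau> (Vmin H)) ?S\<close> show ?thesis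
    by (rule finite_imageD[rotated])
qed

lemma best_response_exists:
  assumes wf: "wf_game H"
    and fin: "finite (verts H)"
    and arcs: "arcs H \<subseteq> verts H \<times> verts H"
    and Vmin_out: "\<forall>y \<in> Vmin H. outn H y \<noteq> {}"
  shows "\<exists>\<tau>. best_response H \<sigma> \<tau>"
proof -
  define S where "S = {\<tau>. min_strategy H \<tau> \<and> (\<forall>x. x \<notin> Vmin H \<longrightarrow> \<tau> x = x)}"
  have "finite S"
    unfolding S_def using fin arcs by (rule finite_min_strategies_fixing_others)
  have "(\<lambda>x. if x \<in> Vmin H then SOME y. (x, y) \<in> arcs H else x) \<in> S"
    using Vmin_out unfolding S_def min_strategy_def outn_def by (auto intro: someI_ex)
  then have "S \<noteq> {}" by blast
  define F where "F \<tau> = (\<Sum>x\<in>verts H. play_value H \<sigma> \<tau> x)" for \<tau>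
  obtain \<tau> where "\<tau> \<in> S" and \<tau>_min: "\<And>\<tau>'. \<tau>' \<in> S \<Longrightarrow> \<not> F \<tau>' < F \<tau>"
    using ex_is_arg_min_if_finite[OF \<open>finite S\<close> \<open>S \<noteq> {}\<close>, of F]
    unfolding is_arg_min_def by blast
  have "play_value H \<sigma> \<tau> x \<le> play_value H \<sigma> \<tau>' x"
    if "min_strategy H \<tau>'" and "x \<in> verts H" for \<tau>' x
  proof (rule ccontr)
    assume "\<not> ?thesis"
    define \<tau>'' where "\<tau>'' y = (if y \<in> Vmin H then \<tau>' y else y)" for y
    have "play_value H \<sigma> \<tau>'' = play_value H \<sigma> \<tau>'"
      by (rule play_value_cong) (simp add: \<tau>''_def)
    with \<open>\<not> ?thesis\<close> have lt: "play_value H \<sigma> \<tau>'' x < play_value H \<sigma> \<tau> x"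
      by simp
    define \<tau>2 where
      "\<tau>2 y = (if play_value H \<sigma> \<tau>'' y < play_value H \<sigma> \<tau> y then \<tau>'' y else \<tau> y)" for y
    have le: "play_value H \<sigma> \<tau>2 y \<le> min (play_value H \<sigma> \<tau> y) (play_value H \<sigma> \<tau>'' y)" for y
      unfolding \<tau>2_def by (rule play_value_switch_le_min[OF wf])
    have "\<tau>2 \<in> S"
      using \<open>\<tau> \<in> S\<close> \<open>min_strategy H \<tau>'\<close>
      unfolding S_def min_strategy_def \<tau>2_def \<tau>''_def by auto
    moreover have "F \<tau>2 < F \<tau>"
      unfolding F_def
    proof (rule sum_strict_mono_ex1[OF fin])
      show "\<forall>y\<in>verts H. play_value H \<sigma> \<tau>2 y \<le> play_value H \<sigma> \<tau> y"
        using le by (meson min.boundedE)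
      show "\<exists>y\<in>verts H. play_value H \<sigma> \<tau>2 y < play_value H \<sigma> \<tau> y"
        using le[of x] lt \<open>x \<in> verts H\<close> by force
    qed
    ultimately show False
      using \<tau>_min by blast
  qed
  with \<open>\<tau> \<in> S\<close> have "best_response H \<sigma> \<tau>"
    unfolding best_response_def S_def by blast
  then show ?thesis by blast
qed

lemma wf_game_if_is_ssg:
  assumes "is_ssg G"
  shows "wf_game G"
proof -
  have "finite (outn G x)" for x
    using assms unfolding is_ssg_def outn_def by (auto intro: finite_subset[of _ "verts G"])
  then show ?thesis
    using assms unfolding is_ssg_def wf_game_def by auto
qed

lemma transform_simps [simp]:
  "Vmax (transform G A f) = Inl ` Vmax G"
  "Vmin (transform G A f) = Inl ` Vmin G"
  "VR (transform G A f) = Inl ` VR G"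
  "VS (transform G A f) = Inl ` VS G \<union> Inr ` A"
  "arcs (transform G A f) =
     {(Inl x, redirect A x y) | x y. (x, y) \<in> arcs G} \<union> {(Inr e, Inr e) | e. e \<in> A}"
  "rdist (transform G A f) (Inl x) = map_pmf (redirect A x) (rdist G x)"
  "sval (transform G A f) (Inl x) = sval G x"
  "sval (transform G A f) (Inr e) = f e"
  unfolding transform_def by simp_all

lemma verts_transform: "verts (transform G A f) = Inl ` verts G \<union> Inr ` A"
  unfolding verts_def by auto

lemma sink_payoff_transform_Inl: "sink_payoff (transform G A f) (Inl x) = sink_payoff G x"
  unfolding sink_payoff_def by auto

lemma wf_game_transform:
  assumes "wf_game G" and "\<And>e. e \<in> A \<Longrightarrow> 0 \<le> f e \<and> f e \<le> 1"
  shows "wf_game (transform G A f)"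
  using assms unfolding wf_game_def by auto

lemma wf_game_transform_play_value:
  "wf_game G \<Longrightarrow> wf_game (transform G A (\<lambda>(x, y). play_value G \<sigma> \<tau> y))"
  by (intro wf_game_transform) (auto simp: play_value_nonneg play_value_le_1)

lemma finite_verts_transform:
  assumes "finite (verts G)" and "arcs G \<subseteq> verts G \<times> verts G" and "A \<subseteq> arcs G"
  shows "finite (verts (transform G A f))"
  using assms finite_subset[of A "verts G \<times> verts G"] by (simp add: verts_transform)

lemma arcs_transform_subset:
  assumes "arcs G \<subseteq> verts G \<times> verts G"
  shows "arcs (transform G A f) \<subseteq> verts (transform G A f) \<times> verts (transform G A f)"
  using assms by (auto simp: verts_transform redirect_def)

lemma outn_transform_nonempty:
  assumes "\<forall>y \<in> Vmin G. outn G y \<noteq> {}"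
  shows "\<forall>y \<in> Vmin (transform G A f). outn (transform G A f) y \<noteq> {}"
  using assms unfolding outn_def by auto

lemma min_strategy_lift:
  "min_strategy G \<tau> \<Longrightarrow> min_strategy (transform G A f) (lift_strategy A \<tau>)"
  unfolding min_strategy_def lift_strategy_def by auto

lemma min_strategy_transform_projection:
  assumes "min_strategy (transform G A f) \<tau>h"
  obtains \<tau> where "min_strategy G \<tau>" and "\<And>y. y \<in> Vmin G \<Longrightarrow> \<tau>h (Inl y) = redirect A y (\<tau> y)"
proof -
  have "\<exists>z. (y, z) \<in> arcs G \<and> \<tau>h (Inl y) = redirect A y z" if "y \<in> Vmin G" for y
    using assms that unfolding min_strategy_def by auto
  then have "\<exists>\<tau>. \<forall>y \<in> Vmin G. (y, \<tau> y) \<in> arcs G \<and> \<tau>h (Inl y) = redirect A y (\<tau> y)"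
    by metis
  then show ?thesis
    using that unfolding min_strategy_def by blast
qed

lemma play_value_transform_projection:
  assumes "\<And>y. y \<in> Vmin G \<Longrightarrow> \<tau>h (Inl y) = redirect A y (\<tau> y)"
  shows "play_value (transform G A f) \<sigma>' \<tau>h = play_value (transform G A f) \<sigma>' (lift_strategy A \<tau>)"
  using assms by (intro play_value_cong) (auto simp: lift_strategy_def)

lemma step_transform_Inl:
  assumes "y \<in> Vmax G \<union> Vmin G \<union> VR G"
  shows "step (transform G A f) (lift_strategy A \<sigma>) (lift_strategy A \<tau>) (Inl y) =
         map_pmf (redirect A y) (step G \<sigma> \<tau> y)"
  using assms unfolding step_def lift_strategy_def by auto

lemma step_transform_Inl_sink:
  assumes "y \<notin> Vmax G \<union> Vmin G \<union> VR G"
  shows "step (transform G A f) \<sigma>' \<tau>' (Inl y) = return_pmf (Inl y)"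
  using assms unfolding step_def by auto

lemma step_transform_Inr: "step (transform G A f) \<sigma>' \<tau>' (Inr e) = return_pmf (Inr e)"
  unfolding step_def by auto

lemma play_value_transform_le:
  fixes G :: "('v, 'b) ssg_scheme" and A :: "('v \<times> 'v) set" and \<sigma> \<tau> :: "'v \<Rightarrow> 'v"
  defines "GH \<equiv> transform G A (\<lambda>(x, y). play_value G \<sigma> \<tau> y)"
  assumes wf: "wf_game G"
  shows "play_value GH (lift_strategy A \<sigma>) (lift_strategy A \<tau>) (Inl x) \<le> play_value G \<sigma> \<tau> x"
proof -
  let ?v = "play_value G \<sigma> \<tau>"
  define u :: "'v + 'v \<times> 'v \<Rightarrow> real" where "u p = (case p of Inl y \<Rightarrow> ?v y | Inr (a, b) \<Rightarrow> ?v b)" for p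
  have wf_GH: "wf_game GH"
    unfolding GH_def using wf by (rule wf_game_transform_play_value)
  have u_Inl: "u (Inl y) = ?v y" for y
    unfolding u_def by simp
  have u_redirect: "u (redirect A y z) = ?v z" for y z
    unfolding u_def redirect_def by simp
  have "play_value GH (lift_strategy A \<sigma>) (lift_strategy A \<tau>) p \<le> u p" for p
  proof (rule play_value_le_excessive[OF wf_GH])
    fix p
    show "sink_payoff GH p \<le> u p"
    proof (cases p)
      case (Inl y)
      then show ?thesis
        using sink_payoff_le_play_value[OF wf]
        by (simp add: GH_def u_def sink_payoff_transform_Inl)
    next
      case (Inr e)
      then show ?thesis
        using play_value_nonneg[OF wf]
        by (cases e) (auto simp: GH_def u_def sink_payoff_def)
    qed
    show "measure_pmf.expectation (step GH (lift_strategy A \<sigma>) (lift_strategy A \<tau>) p) u \<le> u p"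
    proof (cases p)
      case (Inl y)
      show ?thesis
      proof (cases "y \<in> Vmax G \<union> Vmin G \<union> VR G")
        case True
        have "measure_pmf.expectation (step G \<sigma> \<tau> y) ?v = ?v y"
          by (rule play_value_step[OF wf, symmetric])
        then show ?thesis
          unfolding Inl GH_def step_transform_Inl[OF True] by (simp add: u_redirect u_Inl)
      qed (simp add: Inl GH_def step_transform_Inl_sink)
    qed (simp add: GH_def step_transform_Inr)
  qed
  from this[of "Inl x"] show ?thesis
    by (simp add: u_Inl)
qed

lemma expectation_step_min_le_play_value_transform:
  fixes G :: "('v, 'b) ssg_scheme" and A :: "('v \<times> 'v) set" and \<sigma> \<tau> \<tau>' :: "'v \<Rightarrow> 'v"
  defines "GH \<equiv> transform G A (\<lambda>(x, y). play_value G \<sigma> \<tau> y)"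
  defines "w \<equiv> play_value GH (lift_strategy A \<sigma>) (lift_strategy A \<tau>')"
  assumes wf: "wf_game G"
  shows "measure_pmf.expectation (step G \<sigma> \<tau>' y) (\<lambda>z. min (play_value G \<sigma> \<tau> z) (w (Inl z)))
           \<le> w (Inl y)"
proof (cases "y \<in> Vmax G \<union> Vmin G \<union> VR G")
  case True
  have wf_GH: "wf_game GH"
    unfolding GH_def using wf by (rule wf_game_transform_play_value)
  have min_le_redirect: "min (play_value G \<sigma> \<tau> z) (w (Inl z)) \<le> w (redirect A y z)" for z
  proof (cases "(y, z) \<in> A")
    case True
    then have "sink_payoff GH (Inr (y, z)) = play_value G \<sigma> \<tau> z"
      by (simp add: GH_def sink_payoff_def)
    then have "play_value G \<sigma> \<tau> z \<le> w (Inr (y, z))"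
      using sink_payoff_le_play_value[OF wf_GH, of "Inr (y, z)"] by (simp add: w_def)
    then show ?thesis
      using True by (simp add: redirect_def)
  qed (simp add: redirect_def)
  have "measure_pmf.expectation (step G \<sigma> \<tau>' y) (\<lambda>z. min (play_value G \<sigma> \<tau> z) (w (Inl z))) \<le>
        measure_pmf.expectation (step G \<sigma> \<tau>' y) (\<lambda>z. w (redirect A y z))"
    by (rule expectation_step_mono[OF wf] min_le_redirect)+
  also have "\<dots> = measure_pmf.expectation (step GH (lift_strategy A \<sigma>) (lift_strategy A \<tau>') (Inl y)) w"
    unfolding GH_def step_transform_Inl[OF True] by simp
  also have "\<dots> = w (Inl y)"
    unfolding w_def by (rule play_value_step[OF wf_GH, symmetric])
  finally show ?thesis .
next
  case False
  then show ?thesis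
    by (simp add: step_def)
qed

lemma play_value_le_transform:
  fixes G :: "('v, 'b) ssg_scheme" and A :: "('v \<times> 'v) set" and \<sigma> \<tau> :: "'v \<Rightarrow> 'v"
  defines "GH \<equiv> transform G A (\<lambda>(x, y). play_value G \<sigma> \<tau> y)"
  assumes wf: "wf_game G" and br: "best_response G \<sigma> \<tau>" and "x \<in> verts G"
    and "min_strategy GH \<tau>h"
  shows "play_value G \<sigma> \<tau> x \<le> play_value GH (lift_strategy A \<sigma>) \<tau>h (Inl x)"
proof -
  let ?v = "play_value G \<sigma> \<tau>"
  obtain \<tau>' where "min_strategy G \<tau>'"
    and projection: "\<And>y. y \<in> Vmin G \<Longrightarrow> \<tau>h (Inl y) = redirect A y (\<tau>' y)"
    using min_strategy_transform_projection \<open>min_strategy GH \<tau>h\<close> unfolding GH_def by blast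
  let ?w = "\<lambda>y. play_value GH (lift_strategy A \<sigma>) (lift_strategy A \<tau>') (Inl y)"
  let ?\<tau>2 = "\<lambda>y. if ?w y < ?v y then \<tau>' y else \<tau> y"
  have "sink_payoff G y \<le> ?w y" for y
    using sink_payoff_le_play_value[OF wf_game_transform_play_value[OF wf], where x = "Inl y"]
    by (simp add: GH_def sink_payoff_transform_Inl)
  then have switch_le: "play_value G \<sigma> ?\<tau>2 x \<le> min (?v x) (?w x)"
    using expectation_step_min_le_play_value_transform[OF wf]
    by (intro play_value_switch_le[OF wf]) (simp_all add: GH_def)
  have "min_strategy G ?\<tau>2"
    using br \<open>min_strategy G \<tau>'\<close> unfolding best_response_def min_strategy_def by simp
  then have "?v x \<le> play_value G \<sigma> ?\<tau>2 x"
    using br \<open>x \<in> verts G\<close> unfolding best_response_def by blast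
  also have "\<dots> \<le> ?w x"
    using switch_le by simp
  also have "\<dots> = play_value GH (lift_strategy A \<sigma>) \<tau>h (Inl x)"
    using play_value_transform_projection[where G = G, OF projection] unfolding GH_def by simp
  finally show ?thesis .
qed

lemma value_sigma_transform_sigma:
  assumes ssg: "is_ssg G" and "A \<subseteq> arcs G" and "x \<in> verts G"
  shows "value_sigma (transform_sigma G A \<sigma>) (lift_strategy A \<sigma>) (Inl x) = value_sigma G \<sigma> x"
proof -
  have wf: "wf_game G"
    using ssg by (rule wf_game_if_is_ssg)
  have fin: "finite (verts G)" and arcs: "arcs G \<subseteq> verts G \<times> verts G"
    and Vmin_out: "\<forall>y \<in> Vmin G. outn G y \<noteq> {}"
    using ssg unfolding is_ssg_def by auto
  define \<tau> where "\<tau> = (SOME \<tau>. best_response G \<sigma> \<tau>)"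
  have br: "best_response G \<sigma> \<tau>"
    unfolding \<tau>_def using best_response_exists[OF wf fin arcs Vmin_out] by (rule someI_ex)
  define GH where "GH = transform G A (\<lambda>(x, y). play_value G \<sigma> \<tau> y)"
  have GH_eq: "transform_sigma G A \<sigma> = GH"
    unfolding transform_sigma_def value_sigma_def GH_def \<tau>_def ..
  define \<tau>h where "\<tau>h = (SOME \<tau>. best_response GH (lift_strategy A \<sigma>) \<tau>)"
  have "wf_game GH"
    unfolding GH_def using wf by (rule wf_game_transform_play_value)
  then have br_GH: "best_response GH (lift_strategy A \<sigma>) \<tau>h"
    unfolding \<tau>h_def GH_def
    using best_response_exists finite_verts_transform[OF fin arcs \<open>A \<subseteq> arcs G\<close>]
      arcs_transform_subset[OF arcs] outn_transform_nonempty[OF Vmin_out]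
    by (metis someI_ex)
  have "min_strategy GH (lift_strategy A \<tau>)"
    using br min_strategy_lift unfolding best_response_def GH_def by blast
  moreover have "Inl x \<in> verts GH"
    using \<open>x \<in> verts G\<close> unfolding GH_def verts_transform by blast
  ultimately have "play_value GH (lift_strategy A \<sigma>) \<tau>h (Inl x) \<le>
        play_value GH (lift_strategy A \<sigma>) (lift_strategy A \<tau>) (Inl x)"
    using br_GH unfolding best_response_def by blast
  also have "\<dots> \<le> play_value G \<sigma> \<tau> x"
    unfolding GH_def using wf by (rule play_value_transform_le)
  finally have "play_value GH (lift_strategy A \<sigma>) \<tau>h (Inl x) \<le> play_value G \<sigma> \<tau> x" .
  moreover have "play_value G \<sigma> \<tau> x \<le> play_value GH (lift_strategy A \<sigma>) \<tau>h (Inl x)"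
    using br_GH unfolding best_response_def GH_def
    by (intro play_value_le_transform[OF wf br \<open>x \<in> verts G\<close>]) blast
  ultimately have "play_value GH (lift_strategy A \<sigma>) \<tau>h (Inl x) = play_value G \<sigma> \<tau> x"
    by (rule antisym)
  then show ?thesis
    unfolding GH_eq value_sigma_def \<tau>h_def \<tau>_def .
qed

theorem lemma11:
  fixes G :: "'v ssg" and A :: "('v \<times> 'v) set" and \<sigma> :: "'v \<Rightarrow> 'v"
  assumes "is_ssg G"
    and "A \<subseteq> arcs G"
    and "max_strategy G \<sigma>"
  shows "\<forall>x \<in> verts G.
           (value_sigma G \<sigma> x = 0 \<longleftrightarrow>
            value_sigma (transform_sigma G A \<sigma>) (lift_strategy A \<sigma>) (Inl x) = 0)"
  using value_sigma_transform_sigma[OF assms(1,2)] by simp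

end
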